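(* For $i=1,2$ let $\mathbf{L}_i=(L_i,\le)$ be a finite nontrivial join-semilattice with greatest element $1$ and let $(R_i,\vee,\circ)$ be a subsemiring of $(\mathrm{JM}(\mathbf{L}_i),\vee,\circ)$ such that $k_a\in R_i$ for all $a\in L_i$, every $f\in R_i$ satisfies $k_a\le f$ for some $a\in L_i$, and for all $a\in L_i$, $b\in L_i\setminus\{1\}$ there exists $f\in R_i$ with $f(x)=b$ for $x\le a$ and $f(x)>b$ otherwise. If $(R_1,\vee,\circ)$ and $(R_2,\vee,\circ)$ are isomorphic semirings, then $\mathbf{L}_1$ and $\mathbf{L}_2$ are isomorphic.
   Context: For a finite join-semilattice $\mathbf{L}$, $\mathrm{JM}(\mathbf{L})$ is the set of maps $L\to L$ preserving binary joins, a semiring under pointwise join and composition, ordered pointwise. $k_a$ denotes the constant map with value $a$. *)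

theory Defs
  imports Main
begin

definition JM :: "('a::semilattice_sup \<Rightarrow> 'a) set" where
  "JM = {f. \<forall>x y. f (sup x y) = sup (f x) (f y)}"

definition kconst :: "'a \<Rightarrow> ('a \<Rightarrow> 'a)" where
  "kconst a = (\<lambda>_. a)"

definition subsemiring_JM :: "('a::semilattice_sup \<Rightarrow> 'a) set \<Rightarrow> bool" where
  "subsemiring_JM R \<longleftrightarrow> R \<subseteq> JM \<and>
     (\<forall>f\<in>R. \<forall>g\<in>R. (\<lambda>x. sup (f x) (g x)) \<in> R \<and> f \<circ> g \<in> R)"

definition admissible_R :: "('a::{semilattice_sup,order_top} \<Rightarrow> 'a) set \<Rightarrow> bool" where
  "admissible_R R \<longleftrightarrow> subsemiring_JM R \<and>
     (\<forall>a. kconst a \<in> R) \<and>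
     (\<forall>f\<in>R. \<exists>a. \<forall>x. kconst a x \<le> f x) \<and>
     (\<forall>a b. b \<noteq> top \<longrightarrow> (\<exists>f\<in>R. \<forall>x. (x \<le> a \<longrightarrow> f x = b) \<and> (\<not> x \<le> a \<longrightarrow> b < f x)))"

definition semiring_iso_JM ::
  "('a::semilattice_sup \<Rightarrow> 'a) set \<Rightarrow> ('b::semilattice_sup \<Rightarrow> 'b) set \<Rightarrow> bool" where
  "semiring_iso_JM R1 R2 \<longleftrightarrow> (\<exists>\<phi>. bij_betw \<phi> R1 R2 \<and>
     (\<forall>f\<in>R1. \<forall>g\<in>R1. \<phi> (\<lambda>x. sup (f x) (g x)) = (\<lambda>y. sup (\<phi> f y) (\<phi> g y)) \<and>
                      \<phi> (f \<circ> g) = \<phi> f \<circ> \<phi> g))"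

text \<open>Isomorphism of (join-semi)lattices = order isomorphism.\<close>
definition order_iso :: "('a::order \<Rightarrow> 'b::order) \<Rightarrow> bool" where
  "order_iso h \<longleftrightarrow> bij h \<and> (\<forall>x y. x \<le> y \<longleftrightarrow> h x \<le> h y)"

end

theory Submission
  imports Defs
begin

text \<open>When \<open>R\<close> contains all constants, the constant maps are exactly the left zeros of \<open>R\<close>,
  a notion stated purely in terms of composition, so a semiring isomorphism permutes them.
  Sending \<open>a\<close> to the value of the image of \<open>k\<^sub>a\<close> is then a bijection, and it preserves
  joins because the join of \<open>k\<^sub>a\<close> and \<open>k\<^sub>b\<close> is \<open>k\<^bsub>a \<squnion> b\<^esub>\<close>.\<close>

definition left_zeros :: "('a \<Rightarrow> 'a) set \<Rightarrow> ('a \<Rightarrow> 'a) set" where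
  "left_zeros R = {f \<in> R. \<forall>g\<in>R. f \<circ> g = f}"

lemma inj_kconst: "inj kconst"
  by (rule injI) (metis kconst_def)

lemma kconst_eq_iff [simp]: "kconst a = kconst b \<longleftrightarrow> a = b"
  using inj_kconst by (rule inj_eq)

lemma sup_kconst: "(\<lambda>x. sup (kconst a x) (kconst b x)) = kconst (sup a b)"
  by (simp add: kconst_def)

lemma kconst_comp [simp]: "kconst a \<circ> g = kconst a"
  by (auto simp: kconst_def)

lemma comp_kconst [simp]: "f \<circ> kconst a = kconst (f a)"
  by (auto simp: kconst_def)

lemma left_zeros_eq_range_kconst:
  assumes "\<And>a. kconst a \<in> R"
  shows "left_zeros R = range kconst"
proof
  show "left_zeros R \<subseteq> range kconst"
  proof
    fix f assume "f \<in> left_zeros R"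
    then have "f \<circ> kconst x = f" for x
      using assms by (auto simp: left_zeros_def simp del: comp_kconst)
    then have "f = kconst (f x)" for x by simp
    then show "f \<in> range kconst" by blast
  qed
  show "range kconst \<subseteq> left_zeros R"
    using assms by (auto simp: left_zeros_def)
qed

lemma bij_betw_left_zeros:
  assumes bij: "bij_betw \<phi> R1 R2"
    and closed: "\<And>f g. f \<in> R1 \<Longrightarrow> g \<in> R1 \<Longrightarrow> f \<circ> g \<in> R1"
    and comp: "\<And>f g. f \<in> R1 \<Longrightarrow> g \<in> R1 \<Longrightarrow> \<phi> (f \<circ> g) = \<phi> f \<circ> \<phi> g"
  shows "bij_betw \<phi> (left_zeros R1) (left_zeros R2)"
proof (rule bij_betw_subset[OF bij])
  show "left_zeros R1 \<subseteq> R1" by (auto simp: left_zeros_def)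
  have inj: "inj_on \<phi> R1" and onto: "\<phi> ` R1 = R2"
    using bij by (auto simp: bij_betw_def)
  show "\<phi> ` left_zeros R1 = left_zeros R2"
  proof
    show "\<phi> ` left_zeros R1 \<subseteq> left_zeros R2"
      using onto by (auto simp: left_zeros_def comp[symmetric])
    show "left_zeros R2 \<subseteq> \<phi> ` left_zeros R1"
    proof
      fix f' assume f': "f' \<in> left_zeros R2"
      then obtain f where f: "f \<in> R1" "f' = \<phi> f"
        using onto by (auto simp: left_zeros_def)
      have "f \<circ> g = f" if "g \<in> R1" for g
      proof -
        have "\<phi> (f \<circ> g) = \<phi> f"
          using f f' that onto by (auto simp: left_zeros_def comp)
        then show ?thesis
          using inj closed f(1) that by (auto dest: inj_onD)
      qed
      then show "f' \<in> \<phi> ` left_zeros R1"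
        using f by (auto simp: left_zeros_def)
    qed
  qed
qed

lemma bij_betw_range_kconstE:
  assumes "bij_betw \<phi> (range kconst) (range kconst)"
  obtains h where "bij h" and "\<And>a. \<phi> (kconst a) = kconst (h a)"
proof
  define h where "h a = \<phi> (kconst a) undefined" for a
  have \<phi>_kconst: "\<phi> (kconst a) = kconst (h a)" for a
    using bij_betw_apply[OF assms, of "kconst a"] by (auto simp: h_def kconst_def)
  then show "\<phi> (kconst a) = kconst (h a)" for a .
  have "inj h"
  proof
    fix a b assume "h a = h b"
    then have "\<phi> (kconst a) = \<phi> (kconst b)" by (simp add: \<phi>_kconst)
    with assms have "kconst a = kconst b" by (auto simp: bij_betw_def dest: inj_onD)
    then show "a = b" by simp
  qed
  moreover have "b \<in> range h" for b
  proof -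
    have "kconst b \<in> \<phi> ` range kconst"
      using assms by (simp add: bij_betw_def)
    then obtain a where "\<phi> (kconst a) = kconst b" by auto
    then have "kconst (h a) = kconst b" by (simp add: \<phi>_kconst)
    then show "b \<in> range h" by auto
  qed
  ultimately show "bij h" by (auto intro: bijI)
qed

lemma order_iso_if_bij_sup:
  fixes h :: "'a::semilattice_sup \<Rightarrow> 'b::semilattice_sup"
  assumes "bij h" and sup: "\<And>x y. h (sup x y) = sup (h x) (h y)"
  shows "order_iso h"
  unfolding order_iso_def
proof (intro conjI allI)
  show "bij h" by fact
  fix x y :: 'a
  have "x \<le> y \<longleftrightarrow> sup x y = y" by (rule sup.absorb_iff2)
  also have "\<dots> \<longleftrightarrow> h (sup x y) = h y"
    using \<open>bij h\<close> by (simp add: bij_is_inj inj_eq)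
  also have "\<dots> \<longleftrightarrow> h x \<le> h y" by (simp add: sup sup.absorb_iff2)
  finally show "x \<le> y \<longleftrightarrow> h x \<le> h y" .
qed

theorem proposition6p5:
  fixes R1 :: "('a::{finite,semilattice_sup,order_top} \<Rightarrow> 'a) set"
    and R2 :: "('b::{finite,semilattice_sup,order_top} \<Rightarrow> 'b) set"
  assumes "\<exists>x y :: 'a. x \<noteq> y"
    and "\<exists>x y :: 'b. x \<noteq> y"
    and "admissible_R R1"
    and "admissible_R R2"
    and "semiring_iso_JM R1 R2"
  shows "\<exists>h :: 'a \<Rightarrow> 'b. order_iso h"
proof -
  have K1: "\<And>a. kconst a \<in> R1" and K2: "\<And>a. kconst a \<in> R2"
    and closed: "\<And>f g. f \<in> R1 \<Longrightarrow> g \<in> R1 \<Longrightarrow> f \<circ> g \<in> R1"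
    using assms(3,4) by (auto simp: admissible_R_def subsemiring_JM_def)
  obtain \<phi> where bij: "bij_betw \<phi> R1 R2"
    and hom: "\<And>f g. f \<in> R1 \<Longrightarrow> g \<in> R1 \<Longrightarrow>
      \<phi> (\<lambda>x. sup (f x) (g x)) = (\<lambda>y. sup (\<phi> f y) (\<phi> g y)) \<and> \<phi> (f \<circ> g) = \<phi> f \<circ> \<phi> g"
    using assms(5) unfolding semiring_iso_JM_def by blast
  have "bij_betw \<phi> (range kconst) (range kconst)"
    using bij_betw_left_zeros[OF bij closed] hom
    by (simp add: left_zeros_eq_range_kconst K1 K2)
  then obtain h where "bij h" and \<phi>_kconst: "\<And>a. \<phi> (kconst a) = kconst (h a)"
    by (metis bij_betw_range_kconstE)
  have "kconst (h (sup a b)) = kconst (sup (h a) (h b))" for a b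
    using conjunct1[OF hom[OF K1 K1, of a b]] by (simp add: sup_kconst \<phi>_kconst)
  then have "h (sup a b) = sup (h a) (h b)" for a b by simp
  with \<open>bij h\<close> show ?thesis by (blast intro: order_iso_if_bij_sup)
qed

end
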